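(* Let $F$ be a field, $V$ a nonzero vector space over $F$, $\Gamma$ a nonempty set, $\varphi:\Gamma\to\Gamma$ a map and $\mathfrak{w}=(\mathfrak{w}_\alpha)_{\alpha\in\Gamma}\in F^\Gamma$. Let $\sigma_{\varphi,\mathfrak{w}}:V^\Gamma\to V^\Gamma$, $(x_\alpha)_{\alpha\in\Gamma}\mapsto(\mathfrak{w}_\alpha x_{\varphi(\alpha)})_{\alpha\in\Gamma}$. Put \[\mathsf{M}:=\Big\{r\in F\setminus\{0\}: \exists\theta\in P(\varphi)\setminus\downarrow\mathfrak{Z}\ \ \prod_{0\leq i<per(\theta)} \mathfrak{w}_{\varphi^{i}(\theta)}=r^{per(\theta)}\Big\}.\] Then \[{\rm Eigen}(\sigma_{\varphi,\mathfrak{w}},V^\Gamma)=\begin{cases} F\setminus\{0\}, & W(\varphi)\not\subseteq \downarrow\mathfrak{Z},\ \Gamma=\varphi(\Gamma\setminus\mathfrak{Z}),\\ F, & W(\varphi)\not\subseteq\downarrow\mathfrak{Z},\ \Gamma\neq\varphi(\Gamma\setminus\mathfrak{Z}),\\ \mathsf{M}, & W(\varphi)\subseteq \downarrow\mathfrak{Z},\ \Gamma=\varphi(\Gamma\setminus\mathfrak{Z}),\\ \mathsf{M}\cup\{0\}, & W(\varphi)\subseteq\downarrow\mathfrak{Z},\ \Gamma\neq\varphi(\Gamma\setminus\mathfrak{Z}). \end{cases}\]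
   Context: For a linear map $T:W\to W$ on an $F$-vector space $W$, ${\rm Eigen}(T,W)$ is the set of all $r\in F$ such that $T(x)=rx$ for some nonzero $x\in W$. $\mathfrak{Z}:=\{\alpha\in\Gamma:\mathfrak{w}_\alpha=0\}$ and $\downarrow\mathfrak{Z}:=\bigcup_{n\geq0}\varphi^{-n}(\mathfrak{Z})$ (with $\varphi^0$ the identity). A point $a\in\Gamma$ is wandering if the sequence $(\varphi^n(a))_{n\geq1}$ is one-to-one; $W(\varphi)$ is the set of wandering points. $a$ is periodic if $\varphi^n(a)=a$ for some $n\geq1$; $P(\varphi)$ is the set of periodic points, and for $\alpha\in P(\varphi)$, $per(\alpha)=\min\{n\geq1:\varphi^n(\alpha)=\alpha\}$. *)

theory Defs
  imports Main "HOL.Vector_Spaces" "HOL-Library.Function_Algebras"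
begin

definition Eigen :: "('f \<Rightarrow> 'w::zero \<Rightarrow> 'w) \<Rightarrow> ('w \<Rightarrow> 'w) \<Rightarrow> 'f set" where
  "Eigen scaleW T = {r. \<exists>x. x \<noteq> 0 \<and> T x = scaleW r x}"

definition fscale :: "('f \<Rightarrow> 'v \<Rightarrow> 'v) \<Rightarrow> 'f \<Rightarrow> ('a \<Rightarrow> 'v) \<Rightarrow> ('a \<Rightarrow> 'v)" where
  "fscale scale r x = (\<lambda>\<alpha>. scale r (x \<alpha>))"

definition wshift :: "('f \<Rightarrow> 'v \<Rightarrow> 'v) \<Rightarrow> ('a \<Rightarrow> 'a) \<Rightarrow> ('a \<Rightarrow> 'f) \<Rightarrow> ('a \<Rightarrow> 'v) \<Rightarrow> ('a \<Rightarrow> 'v)" where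
  "wshift scale \<phi> w x = (\<lambda>\<alpha>. scale (w \<alpha>) (x (\<phi> \<alpha>)))"

definition Zset :: "('a \<Rightarrow> 'f::zero) \<Rightarrow> 'a set" where
  "Zset w = {\<alpha>. w \<alpha> = 0}"

definition downZ :: "('a \<Rightarrow> 'a) \<Rightarrow> ('a \<Rightarrow> 'f::zero) \<Rightarrow> 'a set" where
  "downZ \<phi> w = (\<Union>n::nat. (\<phi> ^^ n) -` Zset w)"

definition wandering :: "('a \<Rightarrow> 'a) \<Rightarrow> 'a set" where
  "wandering \<phi> = {a. inj (\<lambda>n::nat. (\<phi> ^^ Suc n) a)}"

definition periodic :: "('a \<Rightarrow> 'a) \<Rightarrow> 'a set" where
  "periodic \<phi> = {a. \<exists>n::nat. n \<ge> 1 \<and> (\<phi> ^^ n) a = a}"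

definition per :: "('a \<Rightarrow> 'a) \<Rightarrow> 'a \<Rightarrow> nat" where
  "per \<phi> a = (LEAST n::nat. n \<ge> 1 \<and> (\<phi> ^^ n) a = a)"

definition Mset :: "('a \<Rightarrow> 'a) \<Rightarrow> ('a \<Rightarrow> 'f::field) \<Rightarrow> 'f set" where
  "Mset \<phi> w = {r. r \<noteq> 0 \<and> (\<exists>\<theta> \<in> periodic \<phi> - downZ \<phi> w.
      (\<Prod>i<per \<phi> \<theta>. w ((\<phi> ^^ i) \<theta>)) = r ^ per \<phi> \<theta>)}"

end

theory Submission
  imports Defs
begin

text \<open>A vector eigenfunction \<open>x\<close> with eigenvalue \<open>r \<noteq> 0\<close> is nonzero along the whole forward
  orbit of any point where it is nonzero, and so are the weights there; iterating
  \<open>w \<alpha> x (\<phi> \<alpha>) = r x \<alpha>\<close> around a cycle forces the product of the weights over the cycle to be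
  \<open>r ^ per\<close>. Hence the orbit either wanders outside \<open>\<down>Z\<close> or ends in a cycle contributing to \<open>M\<close>.
  Conversely, starting from such a wandering point or cycle, the eigen-equation determines a
  scalar eigenfunction \<open>g\<close> on the grand orbit (the points whose forward orbit meets it), and
  \<open>g\<close> extends by \<open>0\<close>; then \<open>\<alpha> \<mapsto> g \<alpha> v\<close> is an eigenvector for any \<open>v \<noteq> 0\<close>. The eigenvalue \<open>0\<close>
  occurs exactly when some point \<open>\<beta>\<close> is not the image of a point of nonzero weight: take the
  indicator of \<open>\<beta>\<close>.\<close>

lemma mem_downZ_iff: "\<alpha> \<in> downZ \<phi> w \<longleftrightarrow> (\<exists>n. w ((\<phi> ^^ n) \<alpha>) = 0)"
  by (simp add: downZ_def Zset_def)

lemma funpow_notin_downZ: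
  assumes "\<alpha> \<notin> downZ \<phi> w"
  shows "(\<phi> ^^ m) \<alpha> \<notin> downZ \<phi> w"
proof -
  have "(\<phi> ^^ n) ((\<phi> ^^ m) \<alpha>) = (\<phi> ^^ (n + m)) \<alpha>" for n
    by (simp add: funpow_add)
  with assms show ?thesis by (simp add: mem_downZ_iff)
qed

lemma wandering_funpow_inj:
  assumes "a \<in> wandering \<phi>" and "(\<phi> ^^ j) a = (\<phi> ^^ k) a"
  shows "j = k"
proof -
  have "(\<phi> ^^ Suc j) a = (\<phi> ^^ Suc k) a" using assms(2) by simp
  with assms(1) show ?thesis unfolding wandering_def by (auto dest: injD)
qed

lemma not_wandering_imp_funpow_periodic:
  assumes "a \<notin> wandering \<phi>"
  obtains m where "(\<phi> ^^ m) a \<in> periodic \<phi>"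
proof -
  obtain j k where "j \<noteq> k" and "(\<phi> ^^ Suc j) a = (\<phi> ^^ Suc k) a"
    using assms unfolding wandering_def inj_def by blast
  then obtain j k where "j < k" and eq: "(\<phi> ^^ Suc j) a = (\<phi> ^^ Suc k) a"
    by (metis nat_neq_iff)
  have "(\<phi> ^^ (k - j)) ((\<phi> ^^ Suc j) a) = (\<phi> ^^ (k - j + Suc j)) a"
    by (simp only: funpow_add o_apply)
  also have "\<dots> = (\<phi> ^^ Suc j) a"
    using \<open>j < k\<close> eq by simp
  finally have "(\<phi> ^^ (k - j)) ((\<phi> ^^ Suc j) a) = (\<phi> ^^ Suc j) a" .
  with \<open>j < k\<close> have "(\<phi> ^^ Suc j) a \<in> periodic \<phi>"
    unfolding periodic_def by (intro CollectI exI[of _ "k - j"]) simp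
  then show ?thesis by (rule that)
qed

lemma
  assumes "\<theta> \<in> periodic \<phi>"
  shows per_pos: "0 < per \<phi> \<theta>" and funpow_per: "(\<phi> ^^ per \<phi> \<theta>) \<theta> = \<theta>"
    and funpow_less_per_neq: "\<lbrakk>0 < q; q < per \<phi> \<theta>\<rbrakk> \<Longrightarrow> (\<phi> ^^ q) \<theta> \<noteq> \<theta>"
proof -
  have "\<exists>n. n \<ge> 1 \<and> (\<phi> ^^ n) \<theta> = \<theta>" using assms by (simp add: periodic_def)
  from LeastI_ex[OF this] show "0 < per \<phi> \<theta>" "(\<phi> ^^ per \<phi> \<theta>) \<theta> = \<theta>"
    by (simp_all add: per_def)
  show "\<lbrakk>0 < q; q < per \<phi> \<theta>\<rbrakk> \<Longrightarrow> (\<phi> ^^ q) \<theta> \<noteq> \<theta>"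
    unfolding per_def using not_less_Least by fastforce
qed

lemma funpow_periodic_eq_iff:
  assumes "\<theta> \<in> periodic \<phi>"
  shows "(\<phi> ^^ j) \<theta> = (\<phi> ^^ k) \<theta> \<longleftrightarrow> j mod per \<phi> \<theta> = k mod per \<phi> \<theta>"
proof -
  let ?p = "per \<phi> \<theta>"
  have mod_eq: "(\<phi> ^^ (i mod ?p)) \<theta> = (\<phi> ^^ i) \<theta>" for i
    by (rule funpow_mod_eq[OF funpow_per[OF assms]])
  have less_per: "a = b" if "a < ?p" "b < ?p" "(\<phi> ^^ a) \<theta> = (\<phi> ^^ b) \<theta>" "a \<le> b" for a b
  proof (rule ccontr)
    assume "a \<noteq> b"
    have "(\<phi> ^^ (?p - b + a)) \<theta> = (\<phi> ^^ (?p - b)) ((\<phi> ^^ b) \<theta>)"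
      by (simp add: funpow_add that(3))
    also have "\<dots> = (\<phi> ^^ (?p - b + b)) \<theta>"
      by (simp add: funpow_add)
    also have "\<dots> = \<theta>"
      using that(2) funpow_per[OF assms] by simp
    finally show False
      using funpow_less_per_neq[OF assms, of "?p - b + a"] that \<open>a \<noteq> b\<close> by linarith
  qed
  have "(\<phi> ^^ j) \<theta> = (\<phi> ^^ k) \<theta> \<Longrightarrow> j mod ?p = k mod ?p"
    using less_per[of "j mod ?p" "k mod ?p"] less_per[of "k mod ?p" "j mod ?p"]
      per_pos[OF assms] by (simp add: mod_eq) linarith
  then show ?thesis by (metis mod_eq)
qed

definition orbit_weight :: "('a \<Rightarrow> 'a) \<Rightarrow> ('a \<Rightarrow> 'f::field) \<Rightarrow> 'f \<Rightarrow> 'a \<Rightarrow> nat \<Rightarrow> 'f" where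
  "orbit_weight \<phi> w r \<alpha> n = (\<Prod>i<n. w ((\<phi> ^^ i) \<alpha>)) / r ^ n"

lemma orbit_weight_0 [simp]: "orbit_weight \<phi> w r \<alpha> 0 = 1"
  by (simp add: orbit_weight_def)

lemma orbit_weight_Suc:
  "orbit_weight \<phi> w r \<alpha> (Suc n) = w \<alpha> / r * orbit_weight \<phi> w r (\<phi> \<alpha>) n"
  by (simp add: orbit_weight_def prod.lessThan_Suc_shift funpow_swap1 del: prod.lessThan_Suc)

lemma orbit_weight_add:
  "orbit_weight \<phi> w r \<alpha> (m + n) = orbit_weight \<phi> w r \<alpha> m * orbit_weight \<phi> w r ((\<phi> ^^ m) \<alpha>) n"
  by (induction m arbitrary: \<alpha>) (simp_all add: orbit_weight_Suc funpow_swap1)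

lemma orbit_weight_nonzero:
  assumes "r \<noteq> 0" and "\<And>i. i < n \<Longrightarrow> w ((\<phi> ^^ i) \<alpha>) \<noteq> 0"
  shows "orbit_weight \<phi> w r \<alpha> n \<noteq> 0"
  using assms by (simp add: orbit_weight_def)

lemma orbit_weight_mod_period:
  assumes "(\<phi> ^^ p) \<theta> = \<theta>" and "orbit_weight \<phi> w r \<theta> p = 1"
  shows "orbit_weight \<phi> w r \<theta> (j mod p) = orbit_weight \<phi> w r \<theta> j"
proof -
  have "orbit_weight \<phi> w r \<theta> (q * p + m) = orbit_weight \<phi> w r \<theta> m" for q m
    by (induction q) (simp_all add: add.assoc orbit_weight_add assms)
  from this[of "j div p" "j mod p"] show ?thesis by simp
qed

lemma eigenfunction_from_orbit:
  fixes w :: "'a \<Rightarrow> 'f::field"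
  assumes r: "r \<noteq> 0" and w_orbit: "\<And>n. w ((\<phi> ^^ n) s) \<noteq> 0"
    and consistent: "\<And>j k. (\<phi> ^^ j) s = (\<phi> ^^ k) s \<Longrightarrow>
      orbit_weight \<phi> w r s j = orbit_weight \<phi> w r s k"
  shows "\<exists>g. g s \<noteq> 0 \<and> (\<forall>\<alpha>. w \<alpha> * g (\<phi> \<alpha>) = r * g \<alpha>)"
proof -
  let ?ow = "orbit_weight \<phi> w r"
  \<comment> \<open>Iterating the eigen-equation forces \<open>g \<alpha> = ?ow \<alpha> n * g ((\<phi> ^^ k) s)\<close> whenever
    \<open>(\<phi> ^^ n) \<alpha> = (\<phi> ^^ k) s\<close>, with \<open>g ((\<phi> ^^ k) s) = 1 / ?ow s k\<close> once \<open>g s = 1\<close>;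
    the consistency hypothesis makes this independent of the chosen \<open>n\<close> and \<open>k\<close>.\<close>
  have independent_le: "?ow \<alpha> n / ?ow s k = ?ow \<alpha> n' / ?ow s k'"
    if meet: "(\<phi> ^^ n) \<alpha> = (\<phi> ^^ k) s" and meet': "(\<phi> ^^ n') \<alpha> = (\<phi> ^^ k') s"
      and "n \<le> n'" for \<alpha> n k n' k'
  proof -
    define d where "d = n' - n"
    have n': "n' = n + d" using \<open>n \<le> n'\<close> by (simp add: d_def)
    have "(\<phi> ^^ (k + d)) s = (\<phi> ^^ k') s"
      using meet meet' by (simp add: n' funpow_add add.commute)
    then have k': "?ow s k' = ?ow s k * ?ow ((\<phi> ^^ k) s) d"
      using consistent by (metis orbit_weight_add)
    have "?ow \<alpha> n' = ?ow \<alpha> n * ?ow ((\<phi> ^^ k) s) d"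
      by (simp add: n' orbit_weight_add meet)
    moreover have "?ow ((\<phi> ^^ k) s) d \<noteq> 0"
    proof (rule orbit_weight_nonzero[OF r])
      show "w ((\<phi> ^^ i) ((\<phi> ^^ k) s)) \<noteq> 0" for i
        using w_orbit[of "i + k"] by (simp add: funpow_add)
    qed
    ultimately show ?thesis by (simp add: k')
  qed
  have independent: "?ow \<alpha> n / ?ow s k = ?ow \<alpha> n' / ?ow s k'"
    if "(\<phi> ^^ n) \<alpha> = (\<phi> ^^ k) s" and "(\<phi> ^^ n') \<alpha> = (\<phi> ^^ k') s" for \<alpha> n k n' k'
    using independent_le[OF that] independent_le[OF that(2,1)] by (cases "n \<le> n'") simp_all
  define g where "g \<alpha> = (if \<exists>n k. (\<phi> ^^ n) \<alpha> = (\<phi> ^^ k) s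
    then (SOME v. \<exists>n k. (\<phi> ^^ n) \<alpha> = (\<phi> ^^ k) s \<and> v = ?ow \<alpha> n / ?ow s k) else 0)" for \<alpha>
  have g_meet: "g \<alpha> = ?ow \<alpha> n / ?ow s k" if meet: "(\<phi> ^^ n) \<alpha> = (\<phi> ^^ k) s" for \<alpha> n k
  proof -
    let ?P = "\<lambda>v. \<exists>n' k'. (\<phi> ^^ n') \<alpha> = (\<phi> ^^ k') s \<and> v = ?ow \<alpha> n' / ?ow s k'"
    have "g \<alpha> = Eps ?P"
      using meet by (auto simp: g_def)
    also have "\<dots> = ?ow \<alpha> n / ?ow s k"
    proof (rule someI2[of ?P])
      show "?P (?ow \<alpha> n / ?ow s k)" using meet by blast
      show "v = ?ow \<alpha> n / ?ow s k" if "?P v" for v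
        using that independent[OF meet] by (elim exE conjE) simp
    qed
    finally show ?thesis .
  qed
  have "g s = 1"
    using g_meet[of 0 s 0] by simp
  moreover have "w \<alpha> * g (\<phi> \<alpha>) = r * g \<alpha>" for \<alpha>
  proof (cases "\<exists>n k. (\<phi> ^^ n) (\<phi> \<alpha>) = (\<phi> ^^ k) s")
    case True
    then obtain n k where meet: "(\<phi> ^^ n) (\<phi> \<alpha>) = (\<phi> ^^ k) s" by blast
    then have meet_Suc: "(\<phi> ^^ Suc n) \<alpha> = (\<phi> ^^ k) s"
      by (simp only: funpow_Suc_right o_apply)
    have "r * g \<alpha> = r * (w \<alpha> / r * ?ow (\<phi> \<alpha>) n / ?ow s k)"
      by (simp add: g_meet[OF meet_Suc] orbit_weight_Suc)
    also have "\<dots> = w \<alpha> * g (\<phi> \<alpha>)"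
      using r by (simp add: g_meet[OF meet])
    finally show ?thesis ..
  next
    case False
    then have "\<not> (\<exists>n k. (\<phi> ^^ n) \<alpha> = (\<phi> ^^ k) s)"
      by (metis funpow.simps(2) funpow_swap1 o_apply)
    with False show ?thesis by (simp add: g_def)
  qed
  ultimately show ?thesis by (intro exI[of _ g]) simp
qed

lemma wandering_eigenfunction:
  fixes w :: "'a \<Rightarrow> 'f::field"
  assumes "r \<noteq> 0" and "a \<in> wandering \<phi>" and "a \<notin> downZ \<phi> w"
  shows "\<exists>g. g a \<noteq> 0 \<and> (\<forall>\<alpha>. w \<alpha> * g (\<phi> \<alpha>) = r * g \<alpha>)"
  using assms by (intro eigenfunction_from_orbit)
    (auto simp: mem_downZ_iff dest: wandering_funpow_inj)

lemma Mset_eigenfunction: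
  fixes w :: "'a \<Rightarrow> 'f::field"
  assumes "r \<in> Mset \<phi> w"
  shows "\<exists>g \<theta>. g \<theta> \<noteq> 0 \<and> (\<forall>\<alpha>. w \<alpha> * g (\<phi> \<alpha>) = r * g \<alpha>)"
proof -
  obtain \<theta> where r: "r \<noteq> 0" and \<theta>: "\<theta> \<in> periodic \<phi>" "\<theta> \<notin> downZ \<phi> w"
    and cycle: "(\<Prod>i<per \<phi> \<theta>. w ((\<phi> ^^ i) \<theta>)) = r ^ per \<phi> \<theta>"
    using assms unfolding Mset_def by blast
  have weight_cycle: "orbit_weight \<phi> w r \<theta> (per \<phi> \<theta>) = 1"
    using r by (simp add: orbit_weight_def cycle)
  have consistent: "orbit_weight \<phi> w r \<theta> j = orbit_weight \<phi> w r \<theta> k"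
    if "(\<phi> ^^ j) \<theta> = (\<phi> ^^ k) \<theta>" for j k
  proof -
    have "j mod per \<phi> \<theta> = k mod per \<phi> \<theta>"
      using that funpow_periodic_eq_iff[OF \<theta>(1)] by simp
    then show ?thesis
      using orbit_weight_mod_period[OF funpow_per[OF \<theta>(1)] weight_cycle] by metis
  qed
  have "\<exists>g. g \<theta> \<noteq> 0 \<and> (\<forall>\<alpha>. w \<alpha> * g (\<phi> \<alpha>) = r * g \<alpha>)"
    using \<theta>(2) by (intro eigenfunction_from_orbit[OF r _ consistent]) (simp add: mem_downZ_iff)
  then show ?thesis by blast
qed

lemma mem_Eigen_wshift_iff:
  "r \<in> Eigen (fscale scale) (wshift scale \<phi> w) \<longleftrightarrow>
    (\<exists>x. (\<exists>\<alpha>. x \<alpha> \<noteq> 0) \<and> (\<forall>\<alpha>. scale (w \<alpha>) (x (\<phi> \<alpha>)) = scale r (x \<alpha>)))"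
  unfolding Eigen_def fscale_def wshift_def fun_eq_iff by (auto simp: zero_fun_def)

context vector_space
begin

lemma eigenfunction_imp_Eigen_wshift:
  fixes v :: 'b
  assumes "v \<noteq> 0" and "g s \<noteq> 0" and "\<forall>\<alpha>. w \<alpha> * g (\<phi> \<alpha>) = r * g \<alpha>"
  shows "r \<in> Eigen (fscale scale) (wshift scale \<phi> w)"
  unfolding mem_Eigen_wshift_iff
proof (intro exI conjI allI)
  show "scale (g s) v \<noteq> 0" using assms by simp
  show "scale (w \<alpha>) (scale (g (\<phi> \<alpha>)) v) = scale r (scale (g \<alpha>) v)" for \<alpha>
    using assms(3) by simp
qed

lemma wshift_eigen_iterate:
  assumes "\<forall>\<alpha>. scale (w \<alpha>) (x (\<phi> \<alpha>)) = scale r (x \<alpha>)"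
  shows "scale (r ^ k) (x \<beta>) = scale (\<Prod>i<k. w ((\<phi> ^^ i) \<beta>)) (x ((\<phi> ^^ k) \<beta>))"
proof (induction k)
  case (Suc k)
  have "scale (r ^ Suc k) (x \<beta>) = scale r (scale (r ^ k) (x \<beta>))"
    by simp
  also have "\<dots> = scale (\<Prod>i<k. w ((\<phi> ^^ i) \<beta>)) (scale r (x ((\<phi> ^^ k) \<beta>)))"
    by (simp only: Suc) (simp add: mult.commute)
  also have "\<dots> = scale (\<Prod>i<Suc k. w ((\<phi> ^^ i) \<beta>)) (x ((\<phi> ^^ Suc k) \<beta>))"
    by (simp add: assms[rule_format, symmetric])
  finally show ?case .
qed simp

lemma zero_in_Eigen_wshift_iff:
  fixes v :: 'b
  assumes "v \<noteq> 0"
  shows "0 \<in> Eigen (fscale scale) (wshift scale \<phi> w) \<longleftrightarrow> UNIV \<noteq> \<phi> ` (UNIV - Zset w)"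
proof
  assume "0 \<in> Eigen (fscale scale) (wshift scale \<phi> w)"
  then obtain x \<beta> where "x \<beta> \<noteq> 0" and "\<forall>\<alpha>. scale (w \<alpha>) (x (\<phi> \<alpha>)) = 0"
    unfolding mem_Eigen_wshift_iff by auto
  then have "\<beta> \<notin> \<phi> ` (UNIV - Zset w)"
    by (auto simp: Zset_def)
  then show "UNIV \<noteq> \<phi> ` (UNIV - Zset w)" by blast
next
  assume "UNIV \<noteq> \<phi> ` (UNIV - Zset w)"
  then obtain \<beta> where \<beta>: "\<beta> \<notin> \<phi> ` (UNIV - Zset w)" by blast
  show "0 \<in> Eigen (fscale scale) (wshift scale \<phi> w)"
    using \<beta> by (intro eigenfunction_imp_Eigen_wshift[OF assms,
      where g = "\<lambda>\<alpha>. if \<alpha> = \<beta> then 1 else 0" and s = \<beta>]) (auto simp: Zset_def)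
qed

lemma Eigen_wshift_imp_wandering_or_Mset:
  assumes "r \<noteq> 0" and "r \<in> Eigen (fscale scale) (wshift scale \<phi> w)"
  shows "\<not> wandering \<phi> \<subseteq> downZ \<phi> w \<or> r \<in> Mset \<phi> w"
proof -
  obtain x \<alpha> where "x \<alpha> \<noteq> 0" and eigen: "\<forall>\<beta>. scale (w \<beta>) (x (\<phi> \<beta>)) = scale r (x \<beta>)"
    using assms(2) unfolding mem_Eigen_wshift_iff by auto
  have step: "w \<beta> \<noteq> 0 \<and> x (\<phi> \<beta>) \<noteq> 0" if "x \<beta> \<noteq> 0" for \<beta>
    using eigen[rule_format, of \<beta>] that assms(1) by (metis scale_eq_0_iff)
  have x_orbit: "x ((\<phi> ^^ n) \<alpha>) \<noteq> 0" for n
    by (induction n) (use \<open>x \<alpha> \<noteq> 0\<close> step in auto)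
  then have "\<alpha> \<notin> downZ \<phi> w"
    using step by (auto simp: mem_downZ_iff)
  show ?thesis
  proof (cases "\<alpha> \<in> wandering \<phi>")
    case True
    with \<open>\<alpha> \<notin> downZ \<phi> w\<close> show ?thesis by blast
  next
    case False
    then obtain m where \<theta>: "(\<phi> ^^ m) \<alpha> \<in> periodic \<phi>" (is "?\<theta> \<in> _")
      by (rule not_wandering_imp_funpow_periodic)
    have "scale (r ^ per \<phi> ?\<theta>) (x ?\<theta>) = scale (\<Prod>i<per \<phi> ?\<theta>. w ((\<phi> ^^ i) ?\<theta>)) (x ?\<theta>)"
      using wshift_eigen_iterate[OF eigen, of "per \<phi> ?\<theta>" ?\<theta>] by (simp add: funpow_per[OF \<theta>])
    then have "(\<Prod>i<per \<phi> ?\<theta>. w ((\<phi> ^^ i) ?\<theta>)) = r ^ per \<phi> ?\<theta>"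
      using x_orbit[of m] by simp
    with assms(1) \<theta> funpow_notin_downZ[OF \<open>\<alpha> \<notin> downZ \<phi> w\<close>] have "r \<in> Mset \<phi> w"
      unfolding Mset_def by blast
    then show ?thesis ..
  qed
qed

lemma nonzero_in_Eigen_wshift_iff:
  fixes v :: 'b
  assumes "v \<noteq> 0" and "r \<noteq> 0"
  shows "r \<in> Eigen (fscale scale) (wshift scale \<phi> w) \<longleftrightarrow>
    \<not> wandering \<phi> \<subseteq> downZ \<phi> w \<or> r \<in> Mset \<phi> w"
proof
  assume source: "\<not> wandering \<phi> \<subseteq> downZ \<phi> w \<or> r \<in> Mset \<phi> w"
  have "\<exists>g s. g s \<noteq> 0 \<and> (\<forall>\<alpha>. w \<alpha> * g (\<phi> \<alpha>) = r * g \<alpha>)"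
  proof (cases "wandering \<phi> \<subseteq> downZ \<phi> w")
    case False
    then obtain a where "a \<in> wandering \<phi>" and "a \<notin> downZ \<phi> w" by blast
    from wandering_eigenfunction[OF assms(2) this] show ?thesis by blast
  next
    case True
    with source have "r \<in> Mset \<phi> w" by blast
    then show ?thesis by (rule Mset_eigenfunction)
  qed
  then obtain g s where "g s \<noteq> 0" and "\<forall>\<alpha>. w \<alpha> * g (\<phi> \<alpha>) = r * g \<alpha>"
    by blast
  then show "r \<in> Eigen (fscale scale) (wshift scale \<phi> w)"
    by (rule eigenfunction_imp_Eigen_wshift[OF assms(1)])
qed (rule Eigen_wshift_imp_wandering_or_Mset[OF assms(2)])

end

theorem theorem2p9:
  fixes scale :: "'f::field \<Rightarrow> 'v::ab_group_add \<Rightarrow> 'v"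
    and \<phi> :: "'a \<Rightarrow> 'a" and w :: "'a \<Rightarrow> 'f"
  assumes "Vector_Spaces.vector_space scale"
    and "\<exists>v::'v. v \<noteq> 0"
  shows "Eigen (fscale scale :: 'f \<Rightarrow> ('a \<Rightarrow> 'v) \<Rightarrow> ('a \<Rightarrow> 'v)) (wshift scale \<phi> w) =
    (if \<not> wandering \<phi> \<subseteq> downZ \<phi> w then
       (if UNIV = \<phi> ` (UNIV - Zset w) then UNIV - {0} else UNIV)
     else
       (if UNIV = \<phi> ` (UNIV - Zset w) then Mset \<phi> w else Mset \<phi> w \<union> {0}))"
proof -
  interpret vector_space scale by fact
  obtain v :: 'v where v: "v \<noteq> 0" using assms(2) by blast
  let ?E = "Eigen (fscale scale :: 'f \<Rightarrow> ('a \<Rightarrow> 'v) \<Rightarrow> ('a \<Rightarrow> 'v)) (wshift scale \<phi> w)"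
  have mem_E: "r \<in> ?E \<longleftrightarrow> (if r = 0 then UNIV \<noteq> \<phi> ` (UNIV - Zset w)
      else \<not> wandering \<phi> \<subseteq> downZ \<phi> w \<or> r \<in> Mset \<phi> w)" for r
    using zero_in_Eigen_wshift_iff[OF v, of \<phi> w] nonzero_in_Eigen_wshift_iff[OF v, of r \<phi> w] by simp
  have "0 \<notin> Mset \<phi> w" by (simp add: Mset_def)
  then show ?thesis by (auto simp: mem_E split: if_splits)
qed

end
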